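(* Every integer $n>1$ with $F_n=D_n$ is a prime power pseudoperfect number, i.e., \[ \sum_{p^k\mid n}\frac{1}{p^k}+\frac1n=1, \] where the sum ranges over all prime powers $p^k$ ($p$ prime, $k\ge1$) dividing $n$.
   Context: For a composite integer $n$, let $d(n)$ denote the largest divisor of $n$ with $1<d(n)<n$. Define $f$ on integers $n>1$ by $f(n)=n-1$ if $n$ is prime and $f(n)=n-d(n)$ if $n$ is composite. Let $f^{(0)}(n)=n$ and $f^{(i)}=f\circ f^{(i-1)}$. Define $F_n=\{n,f(n),f^{(2)}(n),\dots,1\}$, the set of iterates of $f$ starting at $n$ up to and including the first occurrence of $1$, and let $D_n$ be the set of positive divisors of $n$. A prime power pseudoperfect number is an integer $n>1$ satisfying $\sum_{p^k\mid n}1/p^k+1/n=1$, the sum over all prime powers $p^k$ ($p$ prime, $k\ge 1$) dividing $n$. *)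

theory Defs
  imports Complex_Main "HOL-Computational_Algebra.Primes"
begin

text \<open>Largest divisor d of n with 1 < d < n (meaningful for composite n).\<close>
definition dmax :: "nat \<Rightarrow> nat" where
  "dmax n = Max {d. d dvd n \<and> 1 < d \<and> d < n}"

definition fstep :: "nat \<Rightarrow> nat" where
  "fstep n = (if prime n then n - 1 else n - dmax n)"

text \<open>F_n: the iterates of f starting at n up to and including the first occurrence of 1.\<close>
definition Fset :: "nat \<Rightarrow> nat set" where
  "Fset n = {(fstep ^^ i) n | i. \<forall>j<i. (fstep ^^ j) n \<noteq> 1}"

definition Dset :: "nat \<Rightarrow> nat set" where
  "Dset n = {d. d dvd n \<and> 0 < d}"

definition prime_power_pseudoperfect :: "nat \<Rightarrow> bool" where
  "prime_power_pseudoperfect n \<longleftrightarrow> 1 < n \<and>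
     (\<Sum>q\<in>{q. q dvd n \<and> (\<exists>p k. prime p \<and> 1 \<le> k \<and> q = p ^ k)}. 1 / real q) + 1 / real n = 1"

end

theory Submission
  imports Defs
begin

text \<open>
  If \<open>F\<^sub>n = D\<^sub>n\<close>, the iterates of \<open>f\<close> run through the divisors of \<open>n\<close> in decreasing order,
  so every proper divisor is \<open>f\<close> of the next larger divisor. Let \<open>P\<close> be the largest prime
  factor of \<open>n\<close> and \<open>n = m P\<^sup>k\<close> with \<open>P \<nmid> m\<close>. The divisor \<open>u\<close> directly above \<open>m\<close> is divisible
  by \<open>P\<close> while \<open>f(u) = m\<close> is not, which forces \<open>u = P\<close> and hence \<open>m = P - 1\<close>.
  Moreover \<open>m\<close> inherits the ordering property, so by induction the prime power divisors
  of \<open>m\<close> contribute \<open>1 - 1/m\<close>, and adding the geometric sum over \<open>P, \<dots>, P\<^sup>k\<close> gives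
  \<open>1 - 1/n\<close>.
\<close>

lemma finite_proper_divisors_nat: "finite {d::nat. d dvd n \<and> 1 < d \<and> d < n}"
  by (rule finite_subset[of _ "{..<n}"]) auto

lemma dmax_props:
  assumes "1 < n" "\<not> prime n"
  shows "dmax n dvd n" "1 < dmax n" "dmax n < n"
proof -
  obtain d where "d dvd n" "d \<noteq> 1" "d \<noteq> n"
    using assms prime_nat_iff by blast
  moreover have "0 < d" "d \<le> n"
    using assms \<open>d dvd n\<close> by (auto intro: dvd_imp_le)
  ultimately have "d \<in> {d. d dvd n \<and> 1 < d \<and> d < n}"
    by simp
  then have "{d. d dvd n \<and> 1 < d \<and> d < n} \<noteq> {}"
    by blast
  then have "dmax n \<in> {d. d dvd n \<and> 1 < d \<and> d < n}"
    unfolding dmax_def using Max_in[OF finite_proper_divisors_nat] by blast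
  then show "dmax n dvd n" "1 < dmax n" "dmax n < n"
    by simp_all
qed

lemma dmax_greatest:
  assumes "d dvd n" "1 < d" "d < n"
  shows "d \<le> dmax n"
  unfolding dmax_def using assms by (intro Max_ge[OF finite_proper_divisors_nat]) auto

lemma fstep_bounds:
  assumes "1 < n"
  shows "0 < fstep n" "fstep n < n"
  using assms dmax_props[OF assms] by (auto simp: fstep_def)

lemma fstep_iterates_decreasing:
  assumes "\<forall>j<b. (fstep ^^ j) n \<noteq> 1" "a \<le> b" "0 < n"
  shows "0 < (fstep ^^ b) n \<and> (fstep ^^ b) n \<le> (fstep ^^ a) n"
  using assms
proof (induction b arbitrary: a)
  case 0
  then show ?case by simp
next
  case (Suc b)
  have "\<forall>j<b. (fstep ^^ j) n \<noteq> 1"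
    using Suc.prems(1) by simp
  then have IH: "0 < (fstep ^^ b) n" "\<And>a. a \<le> b \<Longrightarrow> (fstep ^^ b) n \<le> (fstep ^^ a) n"
    using Suc.IH Suc.prems(3) by blast+
  moreover have "(fstep ^^ b) n \<noteq> 1"
    using Suc.prems by auto
  ultimately have "0 < (fstep ^^ Suc b) n" "(fstep ^^ Suc b) n < (fstep ^^ b) n"
    using fstep_bounds[of "(fstep ^^ b) n"] by auto
  then show ?case
    using IH Suc.prems(2) by (cases "a = Suc b") (auto simp: le_Suc_eq intro: order.trans[OF less_imp_le])
qed

definition fstep_divisor_chain :: "nat \<Rightarrow> bool" where
  "fstep_divisor_chain n \<longleftrightarrow> (\<forall>d. d dvd n \<and> 1 < d \<longrightarrow> fstep d dvd n \<and>
      (\<forall>e. e dvd n \<and> fstep d < e \<longrightarrow> d \<le> e))"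

lemma Fset_eq_Dset_imp_fstep_divisor_chain:
  assumes "1 < n" "Fset n = Dset n"
  shows "fstep_divisor_chain n"
  unfolding fstep_divisor_chain_def
proof (intro allI impI conjI)
  fix d assume d: "d dvd n \<and> 1 < d"
  then have "d \<in> Fset n"
    using assms by (auto simp: Dset_def)
  then obtain i where i: "d = (fstep ^^ i) n" "\<forall>j<i. (fstep ^^ j) n \<noteq> 1"
    unfolding Fset_def by auto
  then have "\<forall>j<Suc i. (fstep ^^ j) n \<noteq> 1"
    using d by (auto simp: less_Suc_eq)
  then have "fstep d \<in> Fset n"
    unfolding Fset_def i(1) by (intro CollectI exI[of _ "Suc i"]) simp
  then show "fstep d dvd n"
    using assms by (simp add: Dset_def)
  fix e assume e: "e dvd n \<and> fstep d < e"
  then have "e \<in> Fset n"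
    using assms by (auto simp: Dset_def)
  then obtain j where j: "e = (fstep ^^ j) n" "\<forall>t<j. (fstep ^^ t) n \<noteq> 1"
    unfolding Fset_def by auto
  show "d \<le> e"
  proof (cases "j \<le> i")
    case True
    then show ?thesis
      using fstep_iterates_decreasing[OF i(2) True] i j assms by simp
  next
    case False
    then have "e \<le> fstep d"
      using fstep_iterates_decreasing[OF j(2), of "Suc i"] i j assms by simp
    with e show ?thesis by simp
  qed
qed

lemma fstep_divisor_chain_fstep_surj:
  assumes "fstep_divisor_chain n" "d dvd n" "0 < d" "d < n"
  obtains u where "u dvd n" "1 < u" "fstep u = d"
proof -
  let ?A = "{x. x dvd n \<and> d < x}"
  define u where "u = Min ?A"
  have "finite ?A"
    by (rule finite_subset[of _ "{..n}"]) (use assms in \<open>auto intro: dvd_imp_le\<close>)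
  moreover have "n \<in> ?A"
    using assms by simp
  ultimately have u: "u dvd n" "d < u" "\<And>x. x dvd n \<Longrightarrow> d < x \<Longrightarrow> u \<le> x"
    unfolding u_def using Min_in[of ?A] Min_le[of ?A] by blast+
  then have "1 < u"
    using assms(3) by simp
  then have chain: "fstep u dvd n" "\<And>e. e dvd n \<Longrightarrow> fstep u < e \<Longrightarrow> u \<le> e"
    using assms(1) u(1) unfolding fstep_divisor_chain_def by blast+
  have "\<not> fstep u < d"
    using chain(2)[OF assms(2)] u(2) by linarith
  moreover have "\<not> d < fstep u"
    using u(3)[OF chain(1)] fstep_bounds(2)[OF \<open>1 < u\<close>] by linarith
  ultimately show ?thesis
    using that u(1) \<open>1 < u\<close> by (metis linorder_neqE_nat)
qed

text \<open>
  With \<open>D = d(u)\<close> and \<open>P \<nmid> D\<close>, \<open>P\<close> divides \<open>u/D\<close>; a prime \<open>q \<noteq> P\<close> of \<open>D\<close> then satisfies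
  \<open>q < u/D\<close>, so \<open>u/q\<close> would be a proper divisor exceeding \<open>D\<close>.
\<close>
lemma largest_prime_factor_dvd_fstep:
  assumes "1 < u" "\<not> prime u" "prime P" "P dvd u" "\<forall>q. prime q \<and> q dvd u \<longrightarrow> q \<le> P"
  shows "P dvd fstep u"
proof (rule ccontr)
  assume nP: "\<not> P dvd fstep u"
  define D where "D = dmax u"
  have D: "D dvd u" "1 < D" "D < u"
    using dmax_props[OF assms(1,2)] D_def by auto
  have "\<not> P dvd D"
    using assms(2,4) nP D(1,3) dvd_diff_nat by (auto simp: fstep_def D_def)
  define c where "c = u div D"
  have uc: "u = D * c"
    using D(1) c_def by simp
  then have "P dvd c"
    using assms(3,4) \<open>\<not> P dvd D\<close> prime_dvd_mult_iff by metis
  moreover have "0 < c"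
    using uc assms(1) by (cases c) auto
  ultimately have "P \<le> c"
    by (rule dvd_imp_le)
  obtain q where q: "prime q" "q dvd D"
    using prime_factor_nat D(2) by (metis less_irrefl)
  have "q dvd u"
    using dvd_trans[OF q(2) D(1)] .
  have "q \<noteq> P"
    using q(2) \<open>\<not> P dvd D\<close> by blast
  moreover have "q \<le> P"
    using assms(5) q(1) \<open>q dvd u\<close> by blast
  ultimately have "q < c"
    using \<open>P \<le> c\<close> by simp
  define e where "e = u div q"
  have eq: "u = e * q"
    using \<open>q dvd u\<close> e_def by simp
  have "1 < q"
    using q(1) prime_gt_1_nat by blast
  moreover have "e \<noteq> 0" "e \<noteq> 1"
    using eq assms(1,2) q(1) by auto
  then have "1 < e"
    by simp
  ultimately have "e \<le> D"
    using eq by (intro dmax_greatest[of e u, folded D_def]) auto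
  have "e * q \<le> D * q"
    using \<open>e \<le> D\<close> by simp
  also have "\<dots> < D * c"
    using \<open>q < c\<close> D(2) by simp
  finally show False
    using eq uc by simp
qed

lemma fstep_divisor_chain_cofactor_eq:
  assumes chain: "fstep_divisor_chain n"
    and P: "prime P" "\<forall>q. prime q \<and> q dvd n \<longrightarrow> q \<le> P"
    and n: "n = m * P ^ k" "0 < k" "\<not> P dvd m"
  shows "m = P - 1"
proof -
  have "0 < m"
    using n(3) by (cases m) auto
  moreover have "1 < P ^ k"
    using P(1) n(2) prime_gt_1_nat one_less_power by blast
  ultimately have "m < n"
    using n(1) by simp
  then obtain u where u: "u dvd n" "1 < u" "fstep u = m"
    using fstep_divisor_chain_fstep_surj[OF chain _ \<open>0 < m\<close>] n(1) by auto
  have "P dvd u"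
  proof (rule ccontr)
    assume "\<not> P dvd u"
    then have "coprime u (P ^ k)"
      using P(1) prime_imp_coprime coprime_commute coprime_power_right_iff by blast
    then have "u dvd m"
      using u(1) n(1) coprime_dvd_mult_left_iff by metis
    then show False
      using \<open>0 < m\<close> fstep_bounds[OF u(2)] u(3) dvd_imp_le by fastforce
  qed
  moreover have "\<forall>q. prime q \<and> q dvd u \<longrightarrow> q \<le> P"
    using P(2) u(1) dvd_trans by blast
  ultimately have "prime u"
    using largest_prime_factor_dvd_fstep[OF u(2) _ P(1)] u(3) n(3) by blast
  then have "u = P"
    using \<open>P dvd u\<close> P(1) primes_dvd_imp_eq by blast
  with u(3) \<open>prime u\<close> show ?thesis
    by (simp add: fstep_def)
qed

lemma fstep_divisor_chain_cofactor:
  assumes chain: "fstep_divisor_chain (m * P ^ k)" and "prime P" "0 < m" "m < P"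
  shows "fstep_divisor_chain m"
  unfolding fstep_divisor_chain_def
proof (intro allI impI conjI)
  fix d assume d: "d dvd m \<and> 1 < d"
  then have "d dvd m * P ^ k"
    by simp
  then have f: "fstep d dvd m * P ^ k" "\<forall>e. e dvd m * P ^ k \<and> fstep d < e \<longrightarrow> d \<le> e"
    using chain d unfolding fstep_divisor_chain_def by blast+
  have "fstep d < P" "0 < fstep d"
    using fstep_bounds[of d] d dvd_imp_le[of d m] \<open>0 < m\<close> \<open>m < P\<close> by auto
  then have "\<not> P dvd fstep d"
    using dvd_imp_le leD by blast
  then have "coprime (fstep d) (P ^ k)"
    using \<open>prime P\<close> prime_imp_coprime coprime_commute coprime_power_right_iff by blast
  then show "fstep d dvd m"
    using f(1) coprime_dvd_mult_left_iff by metis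
  fix e assume "e dvd m \<and> fstep d < e"
  then show "d \<le> e"
    using f(2) by simp
qed

definition prime_power_divisors :: "nat \<Rightarrow> nat set" where
  "prime_power_divisors n = {q. q dvd n \<and> (\<exists>p k. prime p \<and> 1 \<le> k \<and> q = p ^ k)}"

lemma finite_prime_power_divisors: "0 < n \<Longrightarrow> finite (prime_power_divisors n)"
  unfolding prime_power_divisors_def
  by (rule finite_subset[of _ "{..n}"]) (auto intro: dvd_imp_le)

lemma prime_power_divisors_1 [simp]: "prime_power_divisors 1 = {}"
  unfolding prime_power_divisors_def
  using one_less_power[OF prime_gt_1_nat] by (auto simp del: One_nat_def)

lemma prime_power_divisors_mult_prime_power:
  assumes "prime P" "\<not> P dvd m"
  shows "prime_power_divisors (m * P ^ k) = prime_power_divisors m \<union> (\<lambda>j. P ^ j) ` {1..k}"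
proof (intro equalityI subsetI)
  fix q assume "q \<in> prime_power_divisors (m * P ^ k)"
  then obtain p j where q: "q dvd m * P ^ k" "prime p" "1 \<le> j" "q = p ^ j"
    unfolding prime_power_divisors_def by (auto simp del: One_nat_def)
  show "q \<in> prime_power_divisors m \<union> (\<lambda>j. P ^ j) ` {1..k}"
  proof (cases "p = P")
    case True
    have "coprime (P ^ j) m"
      using assms prime_imp_coprime coprime_power_left_iff by blast
    then have "P ^ j dvd P ^ k"
      using q True coprime_dvd_mult_right_iff by metis
    then have "j \<le> k"
      using power_dvd_imp_le assms(1) prime_gt_1_nat by blast
    then show ?thesis
      using q True by auto
  next
    case False
    then have "coprime (p ^ j) (P ^ k)"
      using primes_coprime[OF q(2) assms(1) False] by simp
    then have "q dvd m"
      using q coprime_dvd_mult_left_iff by metis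
    then show ?thesis
      using q unfolding prime_power_divisors_def by auto
  qed
next
  fix q assume "q \<in> prime_power_divisors m \<union> (\<lambda>j. P ^ j) ` {1..k}"
  then show "q \<in> prime_power_divisors (m * P ^ k)"
  proof
    assume "q \<in> (\<lambda>j. P ^ j) ` {1..k}"
    then obtain j where j: "q = P ^ j" "1 \<le> j" "j \<le> k"
      by auto
    then have "q dvd m * P ^ k"
      using le_imp_power_dvd dvd_mult by blast
    with j assms(1) show ?thesis
      unfolding prime_power_divisors_def by blast
  qed (auto simp: prime_power_divisors_def)
qed

lemma sum_inverse_powers:
  assumes "1 < (P::nat)"
  shows "(\<Sum>j\<in>{1..k}. 1 / real (P ^ j)) = (1 - 1 / real P ^ k) / (real P - 1)"
proof (induction k)
  case 0
  then show ?case by simp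
next
  case (Suc k)
  have "real P - 1 > 0"
    using assms by simp
  then have "(1 - 1 / real P ^ k) / (real P - 1) + 1 / real P ^ Suc k
      = (1 - 1 / real P ^ Suc k) / (real P - 1)"
    by (simp add: field_simps)
  with Suc show ?case
    by simp
qed

lemma sum_inverse_prime_power_divisors_mult_prime_power:
  assumes "prime P" "\<not> P dvd m" "0 < m"
  shows "(\<Sum>q\<in>prime_power_divisors (m * P ^ k). 1 / real q)
       = (\<Sum>q\<in>prime_power_divisors m. 1 / real q) + (1 - 1 / real P ^ k) / (real P - 1)"
proof -
  have P: "1 < P"
    using assms(1) prime_gt_1_nat by blast
  have "P ^ j \<notin> prime_power_divisors m" if "1 \<le> j" for j
    using assms(2) dvd_trans[OF dvd_power[of j P]] that
    unfolding prime_power_divisors_def by auto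
  then have disj: "prime_power_divisors m \<inter> (\<lambda>j. P ^ j) ` {1..k} = {}"
    by auto
  have "inj_on (\<lambda>j. P ^ j) {1..k}"
    using P by (auto simp: inj_on_def power_inject_exp)
  then have "(\<Sum>q\<in>(\<lambda>j. P ^ j) ` {1..k}. 1 / real q) = (\<Sum>j\<in>{1..k}. 1 / real (P ^ j))"
    by (simp add: sum.reindex)
  then show ?thesis
    unfolding prime_power_divisors_mult_prime_power[OF assms(1,2)] sum_inverse_powers[OF P, symmetric]
    using disj finite_prime_power_divisors[OF assms(3)] by (simp add: sum.union_disjoint)
qed

lemma fstep_divisor_chain_decompose:
  assumes "1 < n" "fstep_divisor_chain n"
  obtains P k where "prime P" "0 < k" "n = (P - 1) * P ^ k"
proof -
  define P where "P = Max (prime_factors n)"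
  obtain p where "prime p" "p dvd n"
    using assms(1) prime_factor_nat[of n] by auto
  then have "p \<in> prime_factors n"
    using assms(1) by (simp add: in_prime_factors_iff)
  then have "finite (prime_factors n)" "prime_factors n \<noteq> {}"
    by auto
  then have P: "prime P" "P dvd n" "\<forall>q. prime q \<and> q dvd n \<longrightarrow> q \<le> P"
    using assms(1) P_def Max_in Max_ge by (auto simp: in_prime_factors_iff)
  define k where "k = multiplicity P n"
  define m where "m = n div P ^ k"
  have n: "n = m * P ^ k" "\<not> P dvd m"
    using multiplicity_dvd[of P n] multiplicity_decompose[of n P] assms(1) P(1)
    unfolding m_def k_def by (auto simp: prime_nat_iff)
  have "0 < k"
    using n P(2) by (cases k) auto
  moreover have "m = P - 1"
    using fstep_divisor_chain_cofactor_eq[OF assms(2) P(1,3) n(1) \<open>0 < k\<close> n(2)] .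
  ultimately show ?thesis
    using that P(1) n(1) by blast
qed

lemma fstep_divisor_chain_sum_inverse_prime_power_divisors:
  assumes "1 < n" "fstep_divisor_chain n"
  shows "(\<Sum>q\<in>prime_power_divisors n. 1 / real q) + 1 / real n = 1"
  using assms
proof (induction n rule: less_induct)
  case (less n)
  obtain P k where P: "prime P" "0 < k" and "n = (P - 1) * P ^ k"
    using fstep_divisor_chain_decompose[OF less.prems] .
  define m where "m = P - 1"
  have n: "n = m * P ^ k"
    using \<open>n = (P - 1) * P ^ k\<close> m_def by simp
  have "1 < P" "1 < P ^ k"
    using P prime_gt_1_nat one_less_power by blast+
  then have "0 < m" "m < n" "m < P" "\<not> P dvd m"
    using n m_def by (auto dest: dvd_imp_le)
  have IH: "(\<Sum>q\<in>prime_power_divisors m. 1 / real q) = 1 - 1 / real m"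
  proof (cases "m = 1")
    case False
    with \<open>0 < m\<close> \<open>m < P\<close> show ?thesis
      using less.IH[OF \<open>m < n\<close>] fstep_divisor_chain_cofactor[of m P k] less.prems(2) n P(1)
      by simp
  qed (simp del: One_nat_def)
  have "real P - 1 = real m"
    using \<open>1 < P\<close> unfolding m_def by simp
  then have "(\<Sum>q\<in>prime_power_divisors n. 1 / real q) + 1 / real n
      = (1 - 1 / real m) + (1 - 1 / real P ^ k) / real m + 1 / (real m * real P ^ k)"
    unfolding n sum_inverse_prime_power_divisors_mult_prime_power[OF P(1) \<open>\<not> P dvd m\<close> \<open>0 < m\<close>] IH
    by simp
  also have "\<dots> = 1"
    using \<open>0 < m\<close> \<open>1 < P\<close> by (simp add: field_simps)
  finally show ?case .
qed

theorem theorem3: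
  fixes n :: nat
  assumes "1 < n" and "Fset n = Dset n"
  shows "prime_power_pseudoperfect n"
  using fstep_divisor_chain_sum_inverse_prime_power_divisors[OF assms(1)
      Fset_eq_Dset_imp_fstep_divisor_chain[OF assms]] assms(1)
  unfolding prime_power_pseudoperfect_def prime_power_divisors_def by simp

end
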